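(* Let $(V,E)$ be a finite graph with $E\neq\emptyset$ and let $p\in(0,1)$. Let $(\eta_t,\sigma_t)_{t\geq 0}$ be a continuous-time Markov jump process on $\{0,1\}^E\times\{-1,1\}^V$ with transition rates $q((\eta,\sigma),(\eta',\sigma'))$, such that at each jump at most one site or one edge is updated (i.e. $q((\eta,\sigma),(\eta',\sigma'))=0$ unless $(\eta',\sigma')$ differs from $(\eta,\sigma)$ in at most one spin or at most one edge), and which is reversible with respect to $IP$, i.e. $$IP(\eta,\sigma)\,q((\eta,\sigma),(\eta',\sigma'))=IP(\eta',\sigma')\,q((\eta',\sigma'),(\eta,\sigma))$$ for all $(\eta,\sigma),(\eta',\sigma')$. Let $(\eta,\sigma)\in\mathcal C$ be a pair of compatible configurations. If there exists $x\in V$ such that $q((\eta,\sigma),(\eta,\sigma^x))\neq 0$, then $\eta(e)=0$ for all $e\in E_x$.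
   Context: $(V,E)$ is a finite graph with unoriented edges, $E$ a set of pairs of vertices. An edge configuration is $\eta\in\{0,1\}^E$ (1 = open, 0 = closed), a spin configuration is $\sigma\in\{-1,1\}^V$. For $e=\langle x,y\rangle$, $\delta_\sigma(e)=\mathbf 1_{\sigma(x)=\sigma(y)}$. The set of compatible pairs is $\mathcal C=\{(\eta,\sigma):\eta(e)\le\delta_\sigma(e)\ \forall e\in E\}$. The Ising–FK coupling measure is $IP(\eta,\sigma)=\frac1Z\prod_{e\in E}\big(p\mathbf 1_{\eta(e)=1}\delta_\sigma(e)+(1-p)\mathbf 1_{\eta(e)=0}\big)$, with $Z$ the normalizing constant. $E_x$ is the set of edges having $x$ as an endvertex, and $\sigma^x$ is $\sigma$ with the spin at $x$ flipped. *)

theory Defs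
  imports Complex_Main "HOL-Library.FuncSet"
begin

definition graph :: "'v set \<Rightarrow> 'v set set \<Rightarrow> bool" where
  "graph V E \<longleftrightarrow> finite V \<and> (\<forall>e\<in>E. e \<subseteq> V \<and> card e = 2)"

definition edge_configs :: "'v set set \<Rightarrow> ('v set \<Rightarrow> nat) set" where
  "edge_configs E = E \<rightarrow>\<^sub>E {0, 1}"

definition spin_configs :: "'v set \<Rightarrow> ('v \<Rightarrow> int) set" where
  "spin_configs V = V \<rightarrow>\<^sub>E {-1, 1}"

definition states :: "'v set \<Rightarrow> 'v set set \<Rightarrow> (('v set \<Rightarrow> nat) \<times> ('v \<Rightarrow> int)) set" where
  "states V E = edge_configs E \<times> spin_configs V"

definition delta :: "('v \<Rightarrow> int) \<Rightarrow> 'v set \<Rightarrow> nat" where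
  "delta \<sigma> e = (if \<forall>x\<in>e. \<forall>y\<in>e. \<sigma> x = \<sigma> y then 1 else 0)"

definition compatible :: "'v set set \<Rightarrow> ('v set \<Rightarrow> nat) \<Rightarrow> ('v \<Rightarrow> int) \<Rightarrow> bool" where
  "compatible E \<eta> \<sigma> \<longleftrightarrow> (\<forall>e\<in>E. \<eta> e \<le> delta \<sigma> e)"

definition weight :: "'v set set \<Rightarrow> real \<Rightarrow> ('v set \<Rightarrow> nat) \<times> ('v \<Rightarrow> int) \<Rightarrow> real" where
  "weight E p s = (\<Prod>e\<in>E. p * (if fst s e = 1 then 1 else 0) * real (delta (snd s) e)
                         + (1 - p) * (if fst s e = 0 then 1 else 0))"

definition partition_fn :: "'v set \<Rightarrow> 'v set set \<Rightarrow> real \<Rightarrow> real" where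
  "partition_fn V E p = (\<Sum>s\<in>states V E. weight E p s)"

definition IP :: "'v set \<Rightarrow> 'v set set \<Rightarrow> real \<Rightarrow> ('v set \<Rightarrow> nat) \<times> ('v \<Rightarrow> int) \<Rightarrow> real" where
  "IP V E p s = weight E p s / partition_fn V E p"

definition flip :: "('v \<Rightarrow> int) \<Rightarrow> 'v \<Rightarrow> ('v \<Rightarrow> int)" where
  "flip \<sigma> x = \<sigma>(x := - \<sigma> x)"

definition single_update :: "'v set \<Rightarrow> 'v set set \<Rightarrow>
    ('v set \<Rightarrow> nat) \<times> ('v \<Rightarrow> int) \<Rightarrow> ('v set \<Rightarrow> nat) \<times> ('v \<Rightarrow> int) \<Rightarrow> bool" where
  "single_update V E s s' \<longleftrightarrow>
     (fst s' = fst s \<and> (\<exists>x\<in>V. \<forall>y. y \<noteq> x \<longrightarrow> snd s' y = snd s y)) \<or>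
     (snd s' = snd s \<and> (\<exists>e\<in>E. \<forall>f. f \<noteq> e \<longrightarrow> fst s' f = fst s f))"

end

theory Submission
  imports Defs
begin

text \<open>Proof idea: IP charges exactly the compatible pairs. If an edge e at x is open in a
  compatible pair, its two endpoints carry equal spins, so flipping x makes (\<eta>, \<sigma>^x)
  incompatible and IP(\<eta>, \<sigma>^x) = 0. Reversibility then forces
  IP(\<eta>, \<sigma>) q((\<eta>, \<sigma>), (\<eta>, \<sigma>^x)) = 0 with IP(\<eta>, \<sigma>) > 0.\<close>

lemma graph_finite_edges:
  assumes "graph V E"
  shows "finite E"
proof -
  have "E \<subseteq> Pow V" and "finite V" using assms unfolding graph_def by auto
  then show ?thesis by (meson finite_Pow_iff finite_subset)
qed

lemma finite_states:
  assumes "graph V E"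
  shows "finite (states V E)"
  using graph_finite_edges[OF assms] assms
  unfolding graph_def states_def edge_configs_def spin_configs_def
  by (auto intro!: finite_PiE)

lemma flip_in_spin_configs:
  assumes "\<sigma> \<in> spin_configs V" and "x \<in> V"
  shows "flip \<sigma> x \<in> spin_configs V"
  using assms unfolding spin_configs_def flip_def by (auto simp: PiE_iff extensional_def)

lemma delta_le_1: "delta \<sigma> e \<le> 1"
  unfolding delta_def by simp

lemma delta_flip_eq_0:
  assumes "card e = 2" and "x \<in> e" and "\<sigma> x \<noteq> 0" and "delta \<sigma> e = 1"
  shows "delta (flip \<sigma> x) e = 0"
proof -
  obtain y where y: "y \<in> e" "y \<noteq> x"
    using assms(1,2) by (metis card_2_iff insertCI)
  have "\<sigma> y = \<sigma> x" using assms(2,4) y(1) unfolding delta_def by (metis one_neq_zero)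
  then have "flip \<sigma> x y \<noteq> flip \<sigma> x x" using assms(3) y(2) unfolding flip_def by simp
  then show ?thesis using assms(2) y(1) unfolding delta_def by auto
qed

lemma compatible_flip_imp_edge_closed:
  assumes "compatible E \<eta> \<sigma>" and "compatible E \<eta> (flip \<sigma> x)"
    and "e \<in> E" and "card e = 2" and "x \<in> e" and "\<sigma> x \<noteq> 0"
  shows "\<eta> e = 0"
proof -
  have "\<eta> e \<le> delta \<sigma> e" and "\<eta> e \<le> delta (flip \<sigma> x) e"
    using assms(1-3) unfolding compatible_def by auto
  moreover have "delta \<sigma> e = 0 \<or> delta (flip \<sigma> x) e = 0"
  proof (cases "delta \<sigma> e = 1")
    case True
    then show ?thesis using delta_flip_eq_0[of e x \<sigma>, OF assms(4-6)] by simp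
  next
    case False
    then show ?thesis using delta_le_1[of \<sigma> e] by linarith
  qed
  ultimately show ?thesis by auto
qed

lemma weight_nonneg:
  assumes "0 \<le> p" and "p \<le> 1"
  shows "0 \<le> weight E p s"
  unfolding weight_def using assms by (intro prod_nonneg) auto

lemma weight_eq_0_iff:
  assumes "finite E" and "0 < p" and "p < 1" and "\<forall>e\<in>E. \<eta> e \<in> {0, 1}"
  shows "weight E p (\<eta>, \<sigma>) = 0 \<longleftrightarrow> \<not> compatible E \<eta> \<sigma>"
proof -
  have factor_eq_0: "p * (if \<eta> e = 1 then 1 else 0) * real (delta \<sigma> e)
                      + (1 - p) * (if \<eta> e = 0 then 1 else 0) = 0
                    \<longleftrightarrow> \<not> \<eta> e \<le> delta \<sigma> e" if "e \<in> E" for e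
    using assms(2-4) that delta_le_1[of \<sigma> e] by (auto simp: le_Suc_eq)
  show ?thesis
    unfolding weight_def compatible_def using assms(1) factor_eq_0 by simp
qed

lemma partition_fn_pos:
  assumes "graph V E" and "0 < p" and "p < 1"
  shows "0 < partition_fn V E p"
proof -
  define s where "s = ((\<lambda>e\<in>E. 0) :: 'a set \<Rightarrow> nat, (\<lambda>v\<in>V. 1) :: 'a \<Rightarrow> int)"
  have s: "s \<in> states V E"
    unfolding s_def states_def edge_configs_def spin_configs_def by auto
  have "compatible E (fst s) (snd s)"
    unfolding s_def compatible_def by simp
  then have "weight E p s \<noteq> 0"
    using weight_eq_0_iff[OF graph_finite_edges[OF assms(1)] assms(2,3)]
    unfolding s_def by auto
  then have "0 < weight E p s" using weight_nonneg[of p E s] assms(2,3) by simp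
  also have "\<dots> \<le> partition_fn V E p"
    unfolding partition_fn_def using finite_states[OF assms(1)] s weight_nonneg[of p E] assms(2,3)
    by (intro member_le_sum) auto
  finally show ?thesis .
qed

lemma IP_eq_0_iff:
  assumes "graph V E" and "0 < p" and "p < 1" and "(\<eta>, \<sigma>) \<in> states V E"
  shows "IP V E p (\<eta>, \<sigma>) = 0 \<longleftrightarrow> \<not> compatible E \<eta> \<sigma>"
proof -
  have "\<forall>e\<in>E. \<eta> e \<in> {0, 1}"
    using assms(4) unfolding states_def edge_configs_def by auto
  then show ?thesis
    using weight_eq_0_iff[OF graph_finite_edges[OF assms(1)] assms(2,3)]
      partition_fn_pos[OF assms(1-3)]
    unfolding IP_def by simp
qed

theorem lemma1:
  fixes V :: "'v set" and E :: "'v set set" and p :: real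
    and q :: "('v set \<Rightarrow> nat) \<times> ('v \<Rightarrow> int) \<Rightarrow> ('v set \<Rightarrow> nat) \<times> ('v \<Rightarrow> int) \<Rightarrow> real"
    and \<eta> :: "'v set \<Rightarrow> nat" and \<sigma> :: "'v \<Rightarrow> int" and x :: 'v
  assumes "graph V E" and "E \<noteq> {}"
    and "0 < p" and "p < 1"
    and rates_nonneg: "\<forall>s\<in>states V E. \<forall>s'\<in>states V E. s \<noteq> s' \<longrightarrow> 0 \<le> q s s'"
    and single: "\<forall>s\<in>states V E. \<forall>s'\<in>states V E.
                   \<not> single_update V E s s' \<longrightarrow> q s s' = 0"
    and reversible: "\<forall>s\<in>states V E. \<forall>s'\<in>states V E.
                   IP V E p s * q s s' = IP V E p s' * q s' s"
    and "(\<eta>, \<sigma>) \<in> states V E" and "compatible E \<eta> \<sigma>"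
    and "x \<in> V"
    and "q (\<eta>, \<sigma>) (\<eta>, flip \<sigma> x) \<noteq> 0"
  shows "\<forall>e\<in>E. x \<in> e \<longrightarrow> \<eta> e = 0"
proof (intro ballI impI)
  fix e assume "e \<in> E" and "x \<in> e"
  have \<sigma>: "\<sigma> \<in> spin_configs V" using assms(8) unfolding states_def by auto
  have flipped: "(\<eta>, flip \<sigma> x) \<in> states V E"
    using assms(8) flip_in_spin_configs[OF \<sigma> assms(10)] unfolding states_def by auto
  have "IP V E p (\<eta>, \<sigma>) \<noteq> 0" using IP_eq_0_iff[OF assms(1,3,4,8)] assms(9) by simp
  moreover have "IP V E p (\<eta>, \<sigma>) * q (\<eta>, \<sigma>) (\<eta>, flip \<sigma> x)
      = IP V E p (\<eta>, flip \<sigma> x) * q (\<eta>, flip \<sigma> x) (\<eta>, \<sigma>)"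
    using reversible assms(8) flipped by blast
  ultimately have "IP V E p (\<eta>, flip \<sigma> x) \<noteq> 0" using assms(11) by auto
  then have flipped_compatible: "compatible E \<eta> (flip \<sigma> x)"
    using IP_eq_0_iff[OF assms(1,3,4) flipped] by simp
  have "card e = 2" using assms(1) \<open>e \<in> E\<close> unfolding graph_def by auto
  moreover have "\<sigma> x \<noteq> 0"
    using PiE_mem[OF \<sigma>[unfolded spin_configs_def] assms(10)] by auto
  ultimately show "\<eta> e = 0"
    using compatible_flip_imp_edge_closed[OF assms(9) flipped_compatible \<open>e \<in> E\<close>] \<open>x \<in> e\<close>
    by simp
qed

end
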